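(* Consider a switched descriptor system $E_{\sigma(t)}\dot x=A_{\sigma(t)}x$, $\sigma(t)\in\{1,\dots,N\}$, with each $A_i$ nonsingular, and suppose that for each $i=1,\dots,N$ there is a Lyapunov matrix $P_i$ for $(E_i,A_i)$ such that for every solution $x(\cdot)$ and every time $t_*$ at which $\sigma$ switches from $i$ to $j$, $$x(t_*^+)^TP_jx(t_*^+)\le x(t_*^-)^TP_ix(t_*^-).$$ Then the switched system is globally uniformly exponentially stable (GUES).
   Context: For $E,A\in\mathbb{R}^{n\times n}$ with $A$ nonsingular, $(E,A)$ denotes the descriptor system $E\dot x=Ax$; its index is the smallest $k^*\ge0$ with $\mathrm{Im}((A^{-1}E)^{k^*+1})=\mathrm{Im}((A^{-1}E)^{k^*})$ and its consistency space is $\mathcal{C}(E,A)=\mathrm{Im}((A^{-1}E)^{k^*})$. When $\mathcal{C}\ne\{0\}$, $A^{-1}E$ is a bijection of $\mathcal{C}$ onto itself, and with $\tilde A$ the inverse of its restriction, the system on $\mathcal{C}$ is $\dot x=\tilde Ax$. A symmetric $P$ is a Lyapunov matrix for $(E,A)$ if $x^TPx>0$ for nonzero $x\in\mathcal{C}$ and $2x^TP\tilde Ax<0$ for nonzero $x\in\mathcal{C}$. Switched descriptor system: the switching signal $\sigma$ is piecewise constant with values in $\{1,\dots,N\}$ and finitely many discontinuities in every bounded interval. A solution is a function $x(\cdot)$ that is differentiable and satisfies $E_{\sigma(t)}\dot x(t)=A_{\sigma(t)}x(t)$ at every $t$ where $\sigma$ is continuous (so $x(t)\in\mathcal{C}(E_{\sigma(t)},A_{\sigma(t)})$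 there), and has one-sided limits $x(t_*^-)$, $x(t_*^+)$ at each discontinuity $t_*$ of $\sigma$; the differential equation is not required at discontinuities, and the relation between $x(t_*^+)$ and $x(t_*^-)$ as well as which switches are allowed are part of the system specification. The system is GUES if there exist $\beta,\alpha>0$ such that every solution satisfies $\|x(t)\|\le\beta e^{-\alpha(t-t_0)}\|x(t_0)\|$ for all $t\ge t_0$. *)

theory Defs
  imports "HOL-Analysis.Analysis"
begin

definition AinvE :: "real^'n^'n \<Rightarrow> real^'n^'n \<Rightarrow> real^'n \<Rightarrow> real^'n" where
  "AinvE E A = (\<lambda>x. (matrix_inv A ** E) *v x)"

definition dae_index :: "real^'n^'n \<Rightarrow> real^'n^'n \<Rightarrow> nat" where
  "dae_index E A = (LEAST k. range ((AinvE E A) ^^ (Suc k)) = range ((AinvE E A) ^^ k))"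

definition consistency_space :: "real^'n^'n \<Rightarrow> real^'n^'n \<Rightarrow> (real^'n) set" where
  "consistency_space E A = range ((AinvE E A) ^^ (dae_index E A))"

definition Atilde :: "real^'n^'n \<Rightarrow> real^'n^'n \<Rightarrow> real^'n \<Rightarrow> real^'n" where
  "Atilde E A x = (THE y. y \<in> consistency_space E A \<and> AinvE E A y = x)"

definition lyapunov_matrix :: "real^'n^'n \<Rightarrow> real^'n^'n \<Rightarrow> real^'n^'n \<Rightarrow> bool" where
  "lyapunov_matrix E A P \<longleftrightarrow>
     transpose P = P \<and>
     (\<forall>x \<in> consistency_space E A. x \<noteq> 0 \<longrightarrow> x \<bullet> (P *v x) > 0) \<and>
     (\<forall>x \<in> consistency_space E A. x \<noteq> 0 \<longrightarrow> 2 * (x \<bullet> (P *v Atilde E A x)) < 0)"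

definition switch_times :: "real \<Rightarrow> (real \<Rightarrow> nat) \<Rightarrow> real set" where
  "switch_times t0 \<sigma> = {t. t0 \<le> t \<and> \<not> continuous (at t within {t0..}) \<sigma>}"

text \<open>A solution on [t0,oo) of the switched descriptor system with modes 1..N.
  Convention: x(t) = x(t+) at switching times (right-continuity of x).\<close>
definition switched_solution ::
  "nat \<Rightarrow> (nat \<Rightarrow> real^'n^'n) \<Rightarrow> (nat \<Rightarrow> real^'n^'n) \<Rightarrow> real \<Rightarrow> (real \<Rightarrow> nat) \<Rightarrow> (real \<Rightarrow> real^'n) \<Rightarrow> bool"
  where
  "switched_solution N E A t0 \<sigma> x \<longleftrightarrow>
     (\<forall>t \<ge> t0. \<sigma> t \<in> {1..N}) \<and>
     (\<forall>b. finite (switch_times t0 \<sigma> \<inter> {..b})) \<and>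
     (\<forall>t \<ge> t0. t \<notin> switch_times t0 \<sigma> \<longrightarrow>
        (\<exists>v. (x has_vector_derivative v) (at t within {t0..}) \<and>
             E (\<sigma> t) *v v = A (\<sigma> t) *v x t)) \<and>
     (\<forall>t \<in> switch_times t0 \<sigma>. t0 < t \<longrightarrow> (\<exists>l. (x \<longlongrightarrow> l) (at_left t))) \<and>
     (\<forall>t \<ge> t0. (x \<longlongrightarrow> x t) (at_right t))"

definition GUES :: "(real \<times> (real \<Rightarrow> nat) \<times> (real \<Rightarrow> real^'n)) set \<Rightarrow> bool" where
  "GUES Sys \<longleftrightarrow> (\<exists>\<beta> > 0. \<exists>\<alpha> > 0. \<forall>(t0, \<sigma>, x) \<in> Sys. \<forall>t \<ge> t0.
      norm (x t) \<le> \<beta> * exp (- \<alpha> * (t - t0)) * norm (x t0))"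

end

theory Submission
  imports Defs
begin

text \<open>
  On the consistency space C of a mode, M = A\<inverse>E is a bijection, and along a solution x = M x';
  as x' stays in every subspace in which x stays, both x and x' lie in C. Compactness of the unit
  sphere of C makes the Lyapunov conditions quantitative: e |x|^2 \<le> V x \<le> |x|^2 / e and
  V' \<le> - e V on C, with one e > 0 for all (finitely many) modes. Hence exp (e (t - t0)) V (x t),
  with V the form of the mode in force, is nonincreasing between switches; by hypothesis it cannot
  increase across a switch, and |x t| \<le> exp (- e (t - t0) / 2) |x t0| / e follows.
\<close>

lemma difference_quotient_tendsto:
  fixes f :: "real \<Rightarrow> 'a::real_normed_vector"
  assumes "(f has_vector_derivative v) (at t within X)"
  shows "((\<lambda>y. (f y - f t) /\<^sub>R (y - t)) \<longlongrightarrow> v) (at t within X)"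
proof -
  let ?r = "\<lambda>y. f y - (f t + (y - t) *\<^sub>R v)"
  have "((\<lambda>y. (1 / norm (y - t)) *\<^sub>R ?r y) \<longlongrightarrow> 0) (at t within X)"
    using assms unfolding has_vector_derivative_def has_derivative_within by simp
  then have "((\<lambda>y. norm ((1 / norm (y - t)) *\<^sub>R ?r y)) \<longlongrightarrow> 0) (at t within X)"
    by (rule tendsto_norm_zero)
  moreover have "\<forall>\<^sub>F y in at t within X.
      norm ((1 / norm (y - t)) *\<^sub>R ?r y) = norm ((f y - f t) /\<^sub>R (y - t) - v)"
  proof (rule eventually_mono[OF eventually_neq_at_within[of t]])
    fix y assume "y \<noteq> t"
    then have "(f y - f t) /\<^sub>R (y - t) - v = (1 / (y - t)) *\<^sub>R ?r y"
      by (simp add: scaleR_diff_right scaleR_add_right divide_inverse_commute)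
    then show "norm ((1 / norm (y - t)) *\<^sub>R ?r y) = norm ((f y - f t) /\<^sub>R (y - t) - v)"
      by simp
  qed
  ultimately have "((\<lambda>y. norm ((f y - f t) /\<^sub>R (y - t) - v)) \<longlongrightarrow> 0) (at t within X)"
    by (rule Lim_transform_eventually)
  then show ?thesis
    by (simp add: tendsto_norm_zero_iff LIM_zero_iff)
qed

lemma has_vector_derivative_in_subspace:
  fixes f :: "real \<Rightarrow> 'a::euclidean_space"
  assumes "subspace W" and "(f has_vector_derivative v) (at t within X)"
    and "at t within X \<noteq> bot" and "\<forall>\<^sub>F y in at t within X. f y \<in> W" and "f t \<in> W"
  shows "v \<in> W"
proof (rule Lim_in_closed_set)
  show "\<forall>\<^sub>F y in at t within X. (f y - f t) /\<^sub>R (y - t) \<in> W"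
    using assms(4) by (rule eventually_mono) (use assms(1,5) in \<open>simp add: subspace_diff subspace_scale\<close>)
qed (use assms closed_subspace difference_quotient_tendsto in auto)

lemma at_within_atLeast_neq_bot:
  assumes "t0 \<le> (t::real)"
  shows "at t within {t0..} \<noteq> bot"
proof -
  have "at_right t \<le> at t within {t0..}"
    by (rule at_le) (use assms in auto)
  then show ?thesis
    using trivial_limit_at_right_real by (auto simp: bot_unique)
qed

lemma nonincreasing_across_jumps:
  fixes F :: "real \<Rightarrow> real" and S :: "real set"
  assumes finite_S: "\<And>b. finite (S \<inter> {..b})"
    and between: "\<And>a u. t0 \<le> a \<Longrightarrow> a \<le> u \<Longrightarrow> S \<inter> {a<..u} = {} \<Longrightarrow> F u \<le> F a"
    and jumps: "\<And>s. s \<in> S \<Longrightarrow> t0 < s \<Longrightarrow> \<exists>L. (F \<longlongrightarrow> L) (at_left s) \<and> F s \<le> L"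
    and "t0 \<le> t"
  shows "F t \<le> F t0"
  using \<open>t0 \<le> t\<close>
proof (induction "card (S \<inter> {t0<..t})" arbitrary: t rule: less_induct)
  case less
  define T where "T = S \<inter> {t0<..t}"
  have "finite T"
    unfolding T_def using finite_S[of t] by (rule finite_subset[rotated]) auto
  show ?case
  proof (cases "T = {}")
    case True
    then show ?thesis using between[of t0 t] less.prems unfolding T_def by simp
  next
    case False
    define s where "s = Max T"
    have "s \<in> T" and s_max: "\<And>y. y \<in> T \<Longrightarrow> y \<le> s"
      unfolding s_def using \<open>finite T\<close> False by auto
    then have s: "s \<in> S" "t0 < s" "s \<le> t" unfolding T_def by auto
    have "S \<inter> {s<..t} = {}"
      using s s_max unfolding T_def by (force simp: disjoint_iff)
    then have "F t \<le> F s"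
      using between s by simp
    moreover obtain L where L: "(F \<longlongrightarrow> L) (at_left s)" "F s \<le> L"
      using jumps s by blast
    moreover have "\<forall>\<^sub>F u in at_left s. F u \<le> F t0"
      using eventually_at_left_real[OF \<open>t0 < s\<close>]
    proof (rule eventually_mono)
      fix u assume u: "u \<in> {t0<..<s}"
      have "S \<inter> {t0<..u} \<subseteq> T - {s}"
        using u s unfolding T_def by auto
      then have "S \<inter> {t0<..u} \<subset> T"
        using \<open>s \<in> T\<close> by blast
      then have "card (S \<inter> {t0<..u}) < card T"
        using \<open>finite T\<close> by (rule psubset_card_mono[rotated])
      then show "F u \<le> F t0"
        using less.hyps u unfolding T_def by auto
    qed
    then have "L \<le> F t0"
      by (rule tendsto_upperbound[OF L(1)]) simp
    ultimately show ?thesis by simp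
  qed
qed

lemma inner_symmetric_matrix:
  fixes P :: "real^'n^'n"
  assumes "transpose P = P"
  shows "v \<bullet> (P *v y) = y \<bullet> (P *v v)"
  by (metis assms dot_lmul_matrix inner_commute vector_transpose_matrix)

lemma weighted_quadratic_form_has_nonpos_derivative:
  fixes x :: "real \<Rightarrow> real^'n" and P :: "real^'n^'n"
  assumes "transpose P = P" and x': "(x has_vector_derivative v) (at s)"
    and decrease: "e * (x s \<bullet> (P *v x s)) \<le> - 2 * (x s \<bullet> (P *v v))"
  shows "\<exists>D. ((\<lambda>s. exp (e * (s - t0)) * (x s \<bullet> (P *v x s))) has_real_derivative D) (at s) \<and> D \<le> 0"
proof -
  have "((\<lambda>s. x s \<bullet> (P *v x s)) has_vector_derivative x s \<bullet> (P *v v) + v \<bullet> (P *v x s)) (at s)"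
    by (rule bounded_bilinear.has_vector_derivative[OF bounded_bilinear_inner x'
          bounded_linear.has_vector_derivative[OF matrix_vector_mul_bounded_linear x']])
  moreover have "x s \<bullet> (P *v v) + v \<bullet> (P *v x s) = 2 * (x s \<bullet> (P *v v))"
    using inner_symmetric_matrix[OF assms(1), of v "x s"] by simp
  ultimately have V': "((\<lambda>s. x s \<bullet> (P *v x s)) has_real_derivative 2 * (x s \<bullet> (P *v v))) (at s)"
    by (simp add: has_real_derivative_iff_has_vector_derivative)
  have exp': "((\<lambda>s. exp (e * (s - t0))) has_real_derivative exp (e * (s - t0)) * e) (at s)"
    by (auto intro!: derivative_eq_intros)
  have "((\<lambda>s. exp (e * (s - t0)) * (x s \<bullet> (P *v x s))) has_real_derivative
      exp (e * (s - t0)) * (e * (x s \<bullet> (P *v x s)) + 2 * (x s \<bullet> (P *v v)))) (at s)"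
    using DERIV_mult'[OF exp' V'] by (simp add: algebra_simps)
  moreover have "exp (e * (s - t0)) * (e * (x s \<bullet> (P *v x s)) + 2 * (x s \<bullet> (P *v v))) \<le> 0"
    using decrease by (intro mult_nonneg_nonpos) auto
  ultimately show ?thesis
    by blast
qed

lemma le_of_squared_exp_decay:
  fixes a b V W e d :: real
  assumes "e > 0" and "0 \<le> a" and "0 \<le> b" and "V \<le> exp (- e * d) * W"
    and "e * a\<^sup>2 \<le> V" and "e * W \<le> b\<^sup>2"
  shows "a \<le> 1 / e * exp (- (e / 2) * d) * b"
proof -
  have "W \<le> b\<^sup>2 / e"
    using assms(1,6) by (simp add: field_simps)
  then have "exp (- e * d) * W \<le> exp (- e * d) * (b\<^sup>2 / e)"
    by (rule mult_left_mono) simp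
  then have "e * a\<^sup>2 \<le> exp (- e * d) * (b\<^sup>2 / e)"
    using assms(4,5) by linarith
  also have "exp (- e * d) = (exp (- (e / 2) * d))\<^sup>2"
    by (simp add: power2_eq_square flip: exp_add)
  also have "\<dots> * (b\<^sup>2 / e) = e * (1 / e * exp (- (e / 2) * d) * b)\<^sup>2"
    using \<open>e > 0\<close> by (simp add: power2_eq_square)
  finally have "a\<^sup>2 \<le> (1 / e * exp (- (e / 2) * d) * b)\<^sup>2"
    using mult_le_cancel_left_pos[OF \<open>e > 0\<close>] by blast
  then show ?thesis
    by (rule power2_le_imp_le) (use assms(1,3) in simp)
qed

section \<open>The consistency space\<close>

lemma linear_funpow:
  fixes f :: "'a::real_vector \<Rightarrow> 'a"
  shows "linear f \<Longrightarrow> linear (f ^^ k)"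
proof (induction k)
  case (Suc k)
  then show ?case
    using linear_compose[OF Suc.IH Suc.prems] by (simp add: comp_def)
qed (simp add: linear_id)

lemma range_funpow_Suc_subset:
  fixes f :: "'a \<Rightarrow> 'a"
  shows "range (f ^^ Suc k) \<subseteq> range (f ^^ k)"
  by (auto simp: funpow_swap1)

lemma funpow_range_stabilizes:
  fixes f :: "'a::euclidean_space \<Rightarrow> 'a"
  assumes "linear f"
  shows "\<exists>k. range (f ^^ Suc k) = range (f ^^ k)"
proof (rule ccontr)
  assume "\<nexists>k. range (f ^^ Suc k) = range (f ^^ k)"
  then have shrinks: "range (f ^^ Suc k) \<subset> range (f ^^ k)" for k
    using range_funpow_Suc_subset[where f=f and k=k] by (simp add: psubset_eq)
  have span_range: "span (range (f ^^ k)) = range (f ^^ k)" for k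
    using linear_funpow[OF assms] by (simp add: linear_subspace_image)
  have dim_decreases: "dim (range (f ^^ Suc k)) < dim (range (f ^^ k))" for k
    by (rule dim_psubset) (simp only: span_range shrinks)
  have "dim (range (f ^^ k)) + k \<le> dim (range (f ^^ 0))" for k
  proof (induction k)
    case (Suc k)
    then show ?case using dim_decreases[of k] by linarith
  qed simp
  from this[of "Suc DIM('a)"] show False
    using dim_subset_UNIV[of "range (f ^^ 0)"] by linarith
qed

lemma inj_on_linear_image_eq:
  fixes f :: "'a::euclidean_space \<Rightarrow> 'a"
  assumes "linear f" and "subspace C" and "f ` C = C"
  shows "inj_on f C"
proof -
  obtain B where B: "B \<subseteq> C" "independent B" "C \<subseteq> span B" "card B = dim C"
    by (rule basis_exists)
  have "finite B"
    using B(2) by (rule independent_imp_finite)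
  have "span B = C"
    using B(1,3) assms(2) span_minimal by blast
  then have spans: "C \<subseteq> span (f ` B)"
    using assms(1,3) by (simp add: linear_span_image)
  have "card (f ` B) = card B"
    using card_image_le[OF \<open>finite B\<close>, of f] dim_le_card[OF spans] \<open>finite B\<close> B(4) by simp
  then have "inj_on f B"
    using \<open>finite B\<close> by (simp add: inj_on_iff_eq_card)
  moreover have "independent (f ` B)"
  proof (rule card_le_dim_spanning[OF _ spans])
    show "f ` B \<subseteq> C"
      using B(1) assms(3) by blast
    show "finite (f ` B)"
      using \<open>finite B\<close> by (rule finite_imageI)
    show "card (f ` B) \<le> dim C"
      using \<open>card (f ` B) = card B\<close> B(4) by simp
  qed
  ultimately have "inj_on f (span B)"
    using assms(1) linear_inj_on_span_iff_independent_image by blast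
  then show ?thesis
    using \<open>span B = C\<close> by simp
qed

lemma linear_AinvE: "linear (AinvE E A)"
  unfolding AinvE_def by simp

lemma AinvE_image_consistency_space: "AinvE E A ` consistency_space E A = consistency_space E A"
proof -
  have "range (AinvE E A ^^ Suc (dae_index E A)) = range (AinvE E A ^^ dae_index E A)"
    unfolding dae_index_def by (rule LeastI_ex[OF funpow_range_stabilizes[OF linear_AinvE]])
  then show ?thesis
    unfolding consistency_space_def by (simp add: image_comp)
qed

lemma subspace_consistency_space: "subspace (consistency_space E A)"
  unfolding consistency_space_def
  by (rule linear_subspace_image[OF linear_funpow[OF linear_AinvE] subspace_UNIV])

lemma inj_on_AinvE_consistency_space: "inj_on (AinvE E A) (consistency_space E A)"
  by (rule inj_on_linear_image_eq[OF linear_AinvE subspace_consistency_space AinvE_image_consistency_space])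

lemma Atilde_AinvE: "v \<in> consistency_space E A \<Longrightarrow> Atilde E A (AinvE E A v) = v"
  unfolding Atilde_def
  by (rule the_equality) (auto dest: inj_onD[OF inj_on_AinvE_consistency_space])

lemma matrix_inv_left: "invertible A \<Longrightarrow> matrix_inv A ** A = mat 1"
  unfolding matrix_inv_def invertible_def by (rule someI2_ex) auto

lemma AinvE_eqI:
  assumes "invertible A" and "E *v v = A *v y"
  shows "AinvE E A v = y"
proof -
  have "AinvE E A v = (matrix_inv A ** A) *v y"
    using assms(2) unfolding AinvE_def by (simp flip: matrix_vector_mul_assoc)
  then show ?thesis
    using assms(1) by (simp add: matrix_inv_left)
qed

section \<open>Quantitative Lyapunov bounds\<close>

lemma quadratic_bounded_below_on_subspace:
  fixes q :: "'a::euclidean_space \<Rightarrow> real"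
  assumes "continuous_on UNIV q" and homogeneous: "\<And>t x. q (t *\<^sub>R x) = t\<^sup>2 * q x"
    and "subspace C" and pos: "\<And>x. x \<in> C \<Longrightarrow> x \<noteq> 0 \<Longrightarrow> 0 < q x"
  shows "\<exists>c>0. \<forall>x\<in>C. c * (norm x)\<^sup>2 \<le> q x"
proof -
  define K where "K = C \<inter> sphere 0 1"
  have "compact K"
    unfolding K_def using \<open>subspace C\<close> by (simp add: closed_subspace closed_Int_compact)
  have "\<exists>c>0. \<forall>y\<in>K. c \<le> q y"
  proof (cases "K = {}")
    case False
    then obtain m where "m \<in> K" and m_min: "\<And>y. y \<in> K \<Longrightarrow> q m \<le> q y"
      using continuous_attains_inf[OF \<open>compact K\<close> _ continuous_on_subset[OF assms(1)]] by blast
    then have "0 < q m"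
      unfolding K_def by (auto intro: pos)
    then show ?thesis
      using m_min by blast
  qed (auto intro: exI[of _ 1])
  then obtain c where "c > 0" and c: "\<And>y. y \<in> K \<Longrightarrow> c \<le> q y"
    by blast
  have "c * (norm x)\<^sup>2 \<le> q x" if "x \<in> C" for x
  proof (cases "x = 0")
    case True
    then show ?thesis
      using homogeneous[of 0 0] by simp
  next
    case False
    have "(1 / norm x) *\<^sub>R x \<in> K"
      unfolding K_def using \<open>x \<in> C\<close> \<open>subspace C\<close> False by (simp add: subspace_scale)
    then have "c * (norm x)\<^sup>2 \<le> q ((1 / norm x) *\<^sub>R x) * (norm x)\<^sup>2"
      using c by (simp add: mult_right_mono)
    also have "\<dots> = q x"
      using homogeneous[of "1 / norm x" x] False by (simp add: power_divide)
    finally show ?thesis .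
  qed
  then show ?thesis
    using \<open>c > 0\<close> by blast
qed

lemma quadratic_form_le:
  fixes P :: "real^'n^'n"
  shows "\<exists>K>0. \<forall>y. y \<bullet> (P *v y) \<le> K * (norm y)\<^sup>2"
proof -
  obtain K where "K > 0" and K: "\<And>y. norm (P *v y) \<le> K * norm y"
    using linear_bounded_pos[OF matrix_vector_mul_linear] by blast
  have "y \<bullet> (P *v y) \<le> K * (norm y)\<^sup>2" for y
  proof -
    have "y \<bullet> (P *v y) \<le> norm y * norm (P *v y)"
      by (rule norm_cauchy_schwarz)
    also have "\<dots> \<le> norm y * (K * norm y)"
      using K by (simp add: mult_left_mono)
    finally show ?thesis
      by (simp add: power2_eq_square ac_simps)
  qed
  then show ?thesis
    using \<open>K > 0\<close> by blast
qed

lemma eventually_at_right_0_scaled_le: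
  fixes a b :: "'a \<Rightarrow> real"
  assumes "\<forall>x\<in>S. 0 \<le> a x" and "c > 0" and "\<forall>x\<in>S. c * a x \<le> b x"
  shows "\<forall>\<^sub>F e in at_right 0. \<forall>x\<in>S. e * a x \<le> b x"
  unfolding eventually_at_right_field
proof (intro exI[of _ c] conjI allI impI ballI)
  fix e x assume "0 < e" "e < c" "x \<in> S"
  then have "e * a x \<le> c * a x"
    using assms(1) by (simp add: mult_right_mono)
  then show "e * a x \<le> b x"
    using assms(3) \<open>x \<in> S\<close> by fastforce
qed (fact \<open>c > 0\<close>)

text \<open>In the last clause \<open>v\<close> plays the role of \<open>x'\<close> at the point \<open>x = AinvE E A v\<close>, so it
  reads \<open>e V x \<le> - V' x\<close> for \<open>V x = x \<bullet> (P *v x)\<close>.\<close>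

definition lyapunov_bounds :: "real^'n^'n \<Rightarrow> real^'n^'n \<Rightarrow> real^'n^'n \<Rightarrow> real \<Rightarrow> bool" where
  "lyapunov_bounds E A P e \<longleftrightarrow>
     transpose P = P \<and>
     (\<forall>x \<in> consistency_space E A. e * (norm x)\<^sup>2 \<le> x \<bullet> (P *v x)) \<and>
     (\<forall>x \<in> consistency_space E A. e * (x \<bullet> (P *v x)) \<le> (norm x)\<^sup>2) \<and>
     (\<forall>v \<in> consistency_space E A.
        e * (AinvE E A v \<bullet> (P *v AinvE E A v)) \<le> - 2 * (AinvE E A v \<bullet> (P *v v)))"

text \<open>Every clause survives shrinking \<open>e\<close>, so the bounds can be phrased as an eventual
  property for \<open>e \<rightarrow> 0\<close> from above, which finitely many modes satisfy simultaneously.\<close>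

lemma eventually_lyapunov_bounds:
  assumes "lyapunov_matrix E A P"
  shows "\<forall>\<^sub>F e in at_right 0. lyapunov_bounds E A P e"
proof -
  let ?C = "consistency_space E A" and ?M = "AinvE E A"
  let ?V = "\<lambda>x. x \<bullet> (P *v x)"
  have sym: "transpose P = P"
    and V_pos: "\<And>x. x \<in> ?C \<Longrightarrow> x \<noteq> 0 \<Longrightarrow> 0 < ?V x"
    and V'_neg: "\<And>x. x \<in> ?C \<Longrightarrow> x \<noteq> 0 \<Longrightarrow> 2 * (x \<bullet> (P *v Atilde E A x)) < 0"
    using assms unfolding lyapunov_matrix_def by blast+
  have V_nonneg: "0 \<le> ?V x" if "x \<in> ?C" for x
    using V_pos[OF that] by (cases "x = 0") auto
  have M_C: "?M v \<in> ?C" if "v \<in> ?C" for v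
    using that AinvE_image_consistency_space by blast
  have continuous_P: "continuous_on UNIV ((*v) P)"
    by (simp add: linear_continuous_on matrix_vector_mul_bounded_linear)
  have continuous_M: "continuous_on UNIV ?M"
    using linear_AinvE[of E A] by (simp add: linear_continuous_on linear_conv_bounded_linear)
  have "\<exists>c>0. \<forall>x\<in>?C. c * (norm x)\<^sup>2 \<le> ?V x"
    by (rule quadratic_bounded_below_on_subspace[OF _ _ subspace_consistency_space V_pos])
      (auto intro!: continuous_intros continuous_P simp: matrix_vector_mult_scaleR power2_eq_square)
  then obtain c where "c > 0" and c: "\<forall>x\<in>?C. c * (norm x)\<^sup>2 \<le> ?V x"
    by blast
  have V'_neg_M: "0 < - 2 * (?M v \<bullet> (P *v v))" if "v \<in> ?C" "v \<noteq> 0" for v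
  proof -
    have "?M v \<noteq> 0"
      using that inj_onD[OF inj_on_AinvE_consistency_space, of E A v 0]
      by (auto simp: subspace_0[OF subspace_consistency_space] linear_0[OF linear_AinvE])
    then show ?thesis
      using V'_neg[OF M_C[OF \<open>v \<in> ?C\<close>]] Atilde_AinvE[OF \<open>v \<in> ?C\<close>] by simp
  qed
  have "\<exists>d>0. \<forall>v\<in>?C. d * (norm v)\<^sup>2 \<le> - 2 * (?M v \<bullet> (P *v v))"
    by (rule quadratic_bounded_below_on_subspace[OF _ _ subspace_consistency_space V'_neg_M])
      (auto intro!: continuous_intros continuous_P continuous_M
        simp: matrix_vector_mult_scaleR linear_scale[OF linear_AinvE] power2_eq_square)
  then obtain d where "d > 0" and d: "\<forall>v\<in>?C. d * (norm v)\<^sup>2 \<le> - 2 * (?M v \<bullet> (P *v v))"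
    by blast
  obtain K where "K > 0" and K: "\<And>y. ?V y \<le> K * (norm y)\<^sup>2"
    using quadratic_form_le by blast
  obtain B where "B > 0" and B: "\<And>v. norm (?M v) \<le> B * norm v"
    using linear_bounded_pos[OF linear_AinvE] by blast
  have V_upper: "(1 / K) * ?V x \<le> (norm x)\<^sup>2" for x
    using K[of x] \<open>K > 0\<close> by (simp add: field_simps)
  have V'_lower: "d / (K * B\<^sup>2) * ?V (?M v) \<le> - 2 * (?M v \<bullet> (P *v v))" if "v \<in> ?C" for v
  proof -
    have "?V (?M v) \<le> K * (norm (?M v))\<^sup>2"
      by (rule K)
    also have "\<dots> \<le> K * (B * norm v)\<^sup>2"
      using B[of v] \<open>K > 0\<close> by (intro mult_left_mono power_mono) auto
    finally have "?V (?M v) \<le> K * (B * norm v)\<^sup>2" .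
    then have "d / (K * B\<^sup>2) * ?V (?M v) \<le> d * (norm v)\<^sup>2"
      using \<open>K > 0\<close> \<open>B > 0\<close> \<open>d > 0\<close> by (simp add: field_simps power_mult_distrib)
    then show ?thesis
      using d that by fastforce
  qed
  have "\<forall>\<^sub>F e in at_right 0. \<forall>x\<in>?C. e * (norm x)\<^sup>2 \<le> ?V x"
    by (rule eventually_at_right_0_scaled_le[where c = c]) (use c \<open>c > 0\<close> in auto)
  moreover have "\<forall>\<^sub>F e in at_right 0. \<forall>x\<in>?C. e * ?V x \<le> (norm x)\<^sup>2"
    by (rule eventually_at_right_0_scaled_le[where c = "1 / K"])
      (use V_nonneg V_upper \<open>K > 0\<close> in auto)
  moreover have "\<forall>\<^sub>F e in at_right 0. \<forall>v\<in>?C. e * ?V (?M v) \<le> - 2 * (?M v \<bullet> (P *v v))"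
    by (rule eventually_at_right_0_scaled_le[where c = "d / (K * B\<^sup>2)"])
      (use V_nonneg M_C V'_lower \<open>K > 0\<close> \<open>B > 0\<close> \<open>d > 0\<close> in auto)
  ultimately show ?thesis
    unfolding lyapunov_bounds_def by eventually_elim (use sym in auto)
qed

lemma uniform_lyapunov_bounds:
  assumes "finite I" and "\<forall>i\<in>I. lyapunov_matrix (E i) (A i) (P i)"
  shows "\<exists>e>0. \<forall>i\<in>I. lyapunov_bounds (E i) (A i) (P i) e"
proof -
  have "\<forall>\<^sub>F e in at_right 0. \<forall>i\<in>I. lyapunov_bounds (E i) (A i) (P i) e"
    using assms(2) by (intro eventually_ball_finite[OF assms(1)]) (simp add: eventually_lyapunov_bounds)
  then have "\<forall>\<^sub>F e in at_right 0. 0 < e \<and> (\<forall>i\<in>I. lyapunov_bounds (E i) (A i) (P i) e)"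
    using eventually_at_right_less by (rule eventually_rev_mp[OF _ eventually_mono]) auto
  then show ?thesis
    using eventually_happens'[OF trivial_limit_at_right_real] by blast
qed

section \<open>Solutions of the switched system\<close>

locale switched_trajectory =
  fixes N :: nat and E A :: "nat \<Rightarrow> real^'n^'n" and t0 :: real
    and \<sigma> :: "real \<Rightarrow> nat" and x :: "real \<Rightarrow> real^'n"
  assumes solution: "switched_solution N E A t0 \<sigma> x"
    and invertible_A: "\<forall>i\<in>{1..N}. invertible (A i)"

begin

abbreviation switches :: "real set" where
  "switches \<equiv> switch_times t0 \<sigma>"

lemma mode_in_range: "t0 \<le> t \<Longrightarrow> \<sigma> t \<in> {1..N}"
  using solution unfolding switched_solution_def by blast

lemma finite_switches: "finite (switches \<inter> {..b})"
  using solution unfolding switched_solution_def by blast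

lemma derivative_between_switches:
  "t0 \<le> t \<Longrightarrow> t \<notin> switches \<Longrightarrow>
     \<exists>v. (x has_vector_derivative v) (at t within {t0..}) \<and> E (\<sigma> t) *v v = A (\<sigma> t) *v x t"
  using solution unfolding switched_solution_def by blast

lemma left_limit_at_switch: "t \<in> switches \<Longrightarrow> t0 < t \<Longrightarrow> \<exists>l. (x \<longlongrightarrow> l) (at_left t)"
  using solution unfolding switched_solution_def by blast

lemma continuous_from_right: "t0 \<le> t \<Longrightarrow> (x \<longlongrightarrow> x t) (at_right t)"
  using solution unfolding switched_solution_def by blast

lemma AinvE_mode_eqI: "t0 \<le> t \<Longrightarrow> E (\<sigma> t) *v v = A (\<sigma> t) *v y \<Longrightarrow> AinvE (E (\<sigma> t)) (A (\<sigma> t)) v = y"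
  using AinvE_eqI invertible_A mode_in_range by blast

lemma eventually_not_switch: "\<forall>\<^sub>F y in at t within T. y \<notin> switches"
proof -
  obtain d where "d > 0" and d: "\<forall>s\<in>switches \<inter> {..t + 1}. s \<noteq> t \<longrightarrow> d \<le> dist t s"
    using finite_set_avoid[OF finite_switches] by blast
  show ?thesis
    unfolding eventually_at using \<open>d > 0\<close> d
    by (intro exI[of _ "min d 1"]) (force simp: dist_real_def)
qed

lemma eventually_mode_eq:
  assumes "t0 \<le> t" and "t \<notin> switches"
  shows "\<forall>\<^sub>F y in at t within {t0..}. t0 \<le> y \<and> y \<notin> switches \<and> \<sigma> y = \<sigma> t"
proof -
  have "\<forall>\<^sub>F y in at t within {t0..}. \<sigma> y = \<sigma> t"
    using assms unfolding switch_times_def continuous_within by (simp add: tendsto_discrete)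
  moreover have "\<forall>\<^sub>F y in at t within {t0..}. t0 \<le> y"
    by (simp add: eventually_at_filter)
  ultimately show ?thesis
    using eventually_not_switch by eventually_elim blast
qed

lemma mode_constant_between_switches:
  assumes "t0 \<le> a" and "switches \<inter> {a<..<b} = {}"
  shows "\<exists>i. \<forall>s\<in>{a<..<b}. \<sigma> s = i"
proof (cases "a < b")
  case True
  define m where "m = (a + b) / 2"
  have "continuous_on {a<..<b} (\<lambda>s. \<sigma> s = \<sigma> m)"
    unfolding continuous_on_def
  proof
    fix s assume s: "s \<in> {a<..<b}"
    have "at s within {a<..<b} \<le> at s within {t0..}"
      by (rule at_le) (use assms(1) in auto)
    moreover have "t0 \<le> s" and "s \<notin> switches"
      using s assms by auto
    then have "\<forall>\<^sub>F y in at s within {t0..}. \<sigma> y = \<sigma> s"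
      by (rule eventually_mono[OF eventually_mode_eq]) auto
    ultimately have "\<forall>\<^sub>F y in at s within {a<..<b}. \<sigma> y = \<sigma> s"
      by (rule filter_leD)
    then have "\<forall>\<^sub>F y in at s within {a<..<b}. (\<sigma> y = \<sigma> m) = (\<sigma> s = \<sigma> m)"
      by (rule eventually_mono) simp
    then show "((\<lambda>s. \<sigma> s = \<sigma> m) \<longlongrightarrow> (\<sigma> s = \<sigma> m)) (at s within {a<..<b})"
      by (rule tendsto_eventually)
  qed
  then obtain c where "\<forall>s\<in>{a<..<b}. (\<sigma> s = \<sigma> m) = c"
    using connected_iff_const[THEN iffD1, OF connected_Ioo] by blast
  moreover have "m \<in> {a<..<b}"
    unfolding m_def using True by simp
  ultimately show ?thesis
    by blast
qed auto

lemma mode_at_right_end: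
  assumes "t0 \<le> a" and "a < u" and "u \<notin> switches" and i: "\<forall>s\<in>{a<..<u}. \<sigma> s = i"
  shows "\<sigma> u = i"
proof -
  have "at_left u = at u within {a..u}"
    using at_within_Icc_at_left[OF \<open>a < u\<close>] by simp
  also have "\<dots> \<le> at u within {t0..}"
    by (rule at_le) (use \<open>t0 \<le> a\<close> in auto)
  finally have "\<forall>\<^sub>F y in at_left u. \<sigma> y = \<sigma> u"
    using eventually_mode_eq[OF _ \<open>u \<notin> switches\<close>] assms(1,2)
    by (auto dest: filter_leD elim: eventually_mono)
  moreover have "\<forall>\<^sub>F y in at_left u. \<sigma> y = i"
    using i \<open>a < u\<close> by (auto simp: eventually_at_left_field intro!: exI[of _ a])
  ultimately have "\<forall>\<^sub>F y in at_left u. \<sigma> u = i"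
    by eventually_elim simp
  then show ?thesis
    by simp
qed

lemma eventually_mode_at_right: "t0 \<le> t \<Longrightarrow> \<exists>i. \<forall>\<^sub>F y in at_right t. \<sigma> y = i"
proof -
  assume "t0 \<le> t"
  obtain b where "b > t" and b: "\<And>y. t < y \<Longrightarrow> y < b \<Longrightarrow> y \<notin> switches"
    using eventually_not_switch[of t "{t<..}"] unfolding eventually_at_right_field by blast
  then have "switches \<inter> {t<..<b} = {}"
    by auto
  then obtain i where "\<forall>s\<in>{t<..<b}. \<sigma> s = i"
    using mode_constant_between_switches[OF \<open>t0 \<le> t\<close>] by blast
  then have "\<forall>\<^sub>F y in at_right t. \<sigma> y = i"
    unfolding eventually_at_right_field using \<open>b > t\<close> by auto
  then show ?thesis ..
qed

lemma eventually_mode_at_left: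
  assumes "t0 < t"
  shows "\<exists>i. \<forall>\<^sub>F y in at_left t. t0 < y \<and> y \<notin> switches \<and> \<sigma> y = i"
proof -
  have "\<forall>\<^sub>F y in at_left t. t0 < y \<and> y \<notin> switches"
    using eventually_at_left_real[OF assms] eventually_not_switch by eventually_elim auto
  then obtain a where "a < t" and a: "\<And>y. a < y \<Longrightarrow> y < t \<Longrightarrow> t0 < y \<and> y \<notin> switches"
    unfolding eventually_at_left_field by blast
  define a' where "a' = max a t0"
  have "t0 \<le> a'" and "a \<le> a'" and "a' < t"
    unfolding a'_def using \<open>a < t\<close> assms by auto
  moreover have "switches \<inter> {a'<..<t} = {}"
    using a unfolding a'_def by auto
  ultimately obtain i where "\<forall>s\<in>{a'<..<t}. \<sigma> s = i"
    using mode_constant_between_switches by blast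
  then have "\<forall>\<^sub>F y in at_left t. t0 < y \<and> y \<notin> switches \<and> \<sigma> y = i"
    unfolding eventually_at_left_field using \<open>a \<le> a'\<close> \<open>a' < t\<close> a
    by (intro exI[of _ a']) auto
  then show ?thesis ..
qed

text \<open>The mode in force just after \<open>t\<close>. At a switching time it is the mode switched to,
  matching the convention that \<open>x t\<close> is the right limit of \<open>x\<close>.\<close>

definition right_mode :: "real \<Rightarrow> nat" where
  "right_mode t = (SOME i. \<forall>\<^sub>F y in at_right t. \<sigma> y = i)"

lemma eventually_right_mode: "t0 \<le> t \<Longrightarrow> \<forall>\<^sub>F y in at_right t. \<sigma> y = right_mode t"
  unfolding right_mode_def using eventually_mode_at_right by (rule someI_ex)

lemma right_mode_eqI:
  assumes "t0 \<le> t" and "\<forall>\<^sub>F y in at_right t. \<sigma> y = i"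
  shows "right_mode t = i"
proof -
  have "\<forall>\<^sub>F y in at_right t. right_mode t = i"
    using eventually_right_mode[OF assms(1)] assms(2) by eventually_elim simp
  then show ?thesis
    by simp
qed

lemma right_mode_eq_mode:
  assumes "t0 \<le> t" and "t \<notin> switches"
  shows "right_mode t = \<sigma> t"
proof (rule right_mode_eqI[OF assms(1)])
  have "at_right t \<le> at t within {t0..}"
    by (rule at_le) (use assms(1) in auto)
  then show "\<forall>\<^sub>F y in at_right t. \<sigma> y = \<sigma> t"
    using eventually_mode_eq[OF assms] by (auto dest: filter_leD elim: eventually_mono)
qed

lemma right_mode_in_range:
  assumes "t0 \<le> t"
  shows "right_mode t \<in> {1..N}"
proof -
  have "\<forall>\<^sub>F y in at_right t. right_mode t \<in> {1..N}"
    using eventually_right_mode[OF assms] eventually_at_right_less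
    by eventually_elim (metis assms mode_in_range order.trans less_imp_le)
  then show ?thesis
    by simp
qed

text \<open>Off the switching times \<open>x = AinvE (E i) (A i) x'\<close>, and \<open>x'\<close> lies in every subspace
  containing \<open>x\<close> near \<open>t\<close>; iterating puts \<open>x t\<close> in every \<open>range (AinvE (E i) (A i) ^^ k)\<close>.\<close>

lemma trajectory_in_range_funpow:
  assumes "t0 \<le> t" and "t \<notin> switches"
  shows "x t \<in> range (AinvE (E (\<sigma> t)) (A (\<sigma> t)) ^^ k)"
  using assms
proof (induction k arbitrary: t)
  case (Suc k)
  let ?M = "AinvE (E (\<sigma> t)) (A (\<sigma> t))"
  obtain v where v: "(x has_vector_derivative v) (at t within {t0..})"
    and descriptor: "E (\<sigma> t) *v v = A (\<sigma> t) *v x t"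
    using derivative_between_switches Suc.prems by blast
  have "subspace (range (?M ^^ k))"
    by (rule linear_subspace_image[OF linear_funpow[OF linear_AinvE] subspace_UNIV])
  moreover have "\<forall>\<^sub>F y in at t within {t0..}. x y \<in> range (?M ^^ k)"
    using eventually_mode_eq[OF Suc.prems] by eventually_elim (metis Suc.IH)
  ultimately have "v \<in> range (?M ^^ k)"
    using has_vector_derivative_in_subspace[OF _ v at_within_atLeast_neq_bot[OF Suc.prems(1)]]
      Suc.IH[OF Suc.prems] by blast
  then obtain w where "v = (?M ^^ k) w"
    by blast
  then have "x t = (?M ^^ Suc k) w"
    using AinvE_mode_eqI[OF Suc.prems(1) descriptor] by simp
  then show ?case
    by (metis rangeI)
qed simp

lemma trajectory_in_consistency_space:
  "t0 \<le> t \<Longrightarrow> t \<notin> switches \<Longrightarrow> x t \<in> consistency_space (E (\<sigma> t)) (A (\<sigma> t))"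
  unfolding consistency_space_def by (rule trajectory_in_range_funpow)

lemma derivative_in_consistency_space:
  assumes "t0 \<le> t" and "t \<notin> switches" and "(x has_vector_derivative v) (at t within {t0..})"
  shows "v \<in> consistency_space (E (\<sigma> t)) (A (\<sigma> t))"
proof (rule has_vector_derivative_in_subspace[OF subspace_consistency_space assms(3)])
  show "\<forall>\<^sub>F y in at t within {t0..}. x y \<in> consistency_space (E (\<sigma> t)) (A (\<sigma> t))"
    using eventually_mode_eq[OF assms(1,2)] by eventually_elim (metis trajectory_in_consistency_space)
qed (use assms trajectory_in_consistency_space at_within_atLeast_neq_bot in auto)

lemma trajectory_in_right_mode_consistency_space:
  assumes "t0 \<le> t"
  shows "x t \<in> consistency_space (E (right_mode t)) (A (right_mode t))"
proof (rule Lim_in_closed_set[OF closed_subspace[OF subspace_consistency_space] _ _ continuous_from_right[OF assms]])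
  show "\<forall>\<^sub>F y in at_right t. x y \<in> consistency_space (E (right_mode t)) (A (right_mode t))"
    using eventually_right_mode[OF assms] eventually_at_right_less eventually_not_switch
    by eventually_elim (metis assms trajectory_in_consistency_space order.trans less_imp_le)
qed simp

lemma continuous_on_between_switches:
  assumes "t0 \<le> a" and "a < u" and "switches \<inter> {a<..u} = {}"
  shows "continuous_on {a..u} x"
  unfolding continuous_on_eq_continuous_within
proof
  fix s assume s: "s \<in> {a..u}"
  show "continuous (at s within {a..u}) x"
  proof (cases "s = a")
    case True
    have "(x \<longlongrightarrow> x a) (at a within {a..u})"
      using continuous_from_right[OF assms(1)] at_within_Icc_at_right[OF assms(2)] by simp
    then show ?thesis
      using True by (simp add: continuous_within)
  next
    case False
    then have "t0 < s" and "s \<notin> switches"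
      using s assms by auto
    then obtain v where "(x has_vector_derivative v) (at s within {t0..})"
      using derivative_between_switches less_imp_le by blast
    moreover have "at s within {t0..} = at s"
      by (rule at_within_interior) (use \<open>t0 < s\<close> in simp)
    ultimately have "continuous (at s) x"
      using has_vector_derivative_continuous by fastforce
    then show ?thesis
      by (rule continuous_at_imp_continuous_within)
  qed
qed

lemma weighted_quadratic_has_nonpos_derivative:
  assumes bounds: "lyapunov_bounds (E i) (A i) (P i) e"
    and "t0 < s" and "s \<notin> switches" and "\<sigma> s = i"
  shows "\<exists>D. ((\<lambda>s. exp (e * (s - t0)) * (x s \<bullet> (P i *v x s))) has_real_derivative D) (at s) \<and> D \<le> 0"
proof -
  obtain v where v: "(x has_vector_derivative v) (at s within {t0..})"
    and descriptor: "E i *v v = A i *v x s"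
    using derivative_between_switches[of s] assms by auto
  have "at s within {t0..} = at s"
    by (rule at_within_interior) (use \<open>t0 < s\<close> in simp)
  then have x': "(x has_vector_derivative v) (at s)"
    using v by simp
  have "v \<in> consistency_space (E i) (A i)"
    using derivative_in_consistency_space[OF _ _ v] assms by simp
  then have "e * (AinvE (E i) (A i) v \<bullet> (P i *v AinvE (E i) (A i) v))
      \<le> - 2 * (AinvE (E i) (A i) v \<bullet> (P i *v v))"
    using bounds unfolding lyapunov_bounds_def by blast
  moreover have "AinvE (E i) (A i) v = x s"
    using AinvE_mode_eqI[of s v "x s"] assms descriptor by simp
  ultimately have "e * (x s \<bullet> (P i *v x s)) \<le> - 2 * (x s \<bullet> (P i *v v))"
    by simp
  moreover have "transpose (P i) = P i"
    using bounds unfolding lyapunov_bounds_def by blast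
  ultimately show ?thesis
    using weighted_quadratic_form_has_nonpos_derivative[OF _ x'] by blast
qed

definition weighted_lyapunov :: "(nat \<Rightarrow> real^'n^'n) \<Rightarrow> real \<Rightarrow> real \<Rightarrow> real" where
  "weighted_lyapunov P e t = exp (e * (t - t0)) * (x t \<bullet> (P (right_mode t) *v x t))"

lemma weighted_lyapunov_between_switches:
  assumes bounds: "\<forall>i\<in>{1..N}. lyapunov_bounds (E i) (A i) (P i) e"
    and "t0 \<le> a" and "a < u" and no_switch: "switches \<inter> {a<..u} = {}"
  shows "weighted_lyapunov P e u \<le> weighted_lyapunov P e a"
proof -
  obtain i where i: "\<forall>s\<in>{a<..<u}. \<sigma> s = i"
    using mode_constant_between_switches[OF \<open>t0 \<le> a\<close>, of u] no_switch by fastforce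
  have "u \<notin> switches" and "t0 \<le> u"
    using no_switch assms by auto
  have "right_mode a = i"
    by (rule right_mode_eqI[OF \<open>t0 \<le> a\<close>])
      (use i \<open>a < u\<close> in \<open>auto simp: eventually_at_right_field intro!: exI[of _ u]\<close>)
  have "\<sigma> u = i"
    using mode_at_right_end[OF \<open>t0 \<le> a\<close> \<open>a < u\<close> \<open>u \<notin> switches\<close> i] .
  then have "right_mode u = i" and "i \<in> {1..N}"
    using right_mode_eq_mode[OF \<open>t0 \<le> u\<close> \<open>u \<notin> switches\<close>] mode_in_range[OF \<open>t0 \<le> u\<close>] by auto
  let ?G = "\<lambda>s. exp (e * (s - t0)) * (x s \<bullet> (P i *v x s))"
  have "?G u \<le> ?G a"
  proof (rule DERIV_nonpos_imp_decreasing_open[OF less_imp_le[OF \<open>a < u\<close>]])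
    show "\<exists>D. (?G has_real_derivative D) (at s) \<and> D \<le> 0" if "a < s" "s < u" for s
    proof (rule weighted_quadratic_has_nonpos_derivative)
      show "lyapunov_bounds (E i) (A i) (P i) e"
        using bounds \<open>i \<in> {1..N}\<close> by blast
      show "t0 < s" and "s \<notin> switches" and "\<sigma> s = i"
        using i that \<open>t0 \<le> a\<close> no_switch by auto
    qed
    show "continuous_on {a..u} ?G"
      using continuous_on_between_switches[OF \<open>t0 \<le> a\<close> \<open>a < u\<close> no_switch]
      by (intro continuous_intros bounded_linear.continuous_on[OF matrix_vector_mul_bounded_linear])
  qed
  then show ?thesis
    unfolding weighted_lyapunov_def \<open>right_mode a = i\<close> \<open>right_mode u = i\<close> .
qed

definition lyapunov_nonincreasing_at_switches :: "(nat \<Rightarrow> real^'n^'n) \<Rightarrow> bool" where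
  "lyapunov_nonincreasing_at_switches P \<longleftrightarrow>
     (\<forall>ts \<in> switches. \<forall>i j xm xp.
        t0 < ts \<and> (\<forall>\<^sub>F t in at_left ts. \<sigma> t = i) \<and> (\<forall>\<^sub>F t in at_right ts. \<sigma> t = j) \<and>
        (x \<longlongrightarrow> xm) (at_left ts) \<and> (x \<longlongrightarrow> xp) (at_right ts) \<longrightarrow>
        xp \<bullet> (P j *v xp) \<le> xm \<bullet> (P i *v xm))"

lemma weighted_lyapunov_at_switch:
  assumes "lyapunov_nonincreasing_at_switches P" and "s \<in> switches" and "t0 < s"
  shows "\<exists>L. (weighted_lyapunov P e \<longlongrightarrow> L) (at_left s) \<and> weighted_lyapunov P e s \<le> L"
proof -
  obtain i where mode_left: "\<forall>\<^sub>F y in at_left s. t0 < y \<and> y \<notin> switches \<and> \<sigma> y = i"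
    using eventually_mode_at_left[OF \<open>t0 < s\<close>] by blast
  obtain xm where xm: "(x \<longlongrightarrow> xm) (at_left s)"
    using left_limit_at_switch assms by blast
  have "x s \<bullet> (P (right_mode s) *v x s) \<le> xm \<bullet> (P i *v xm)"
    using assms(1,2) \<open>t0 < s\<close> eventually_mono[OF mode_left] eventually_right_mode xm continuous_from_right
    unfolding lyapunov_nonincreasing_at_switches_def by (meson less_imp_le)
  then have "weighted_lyapunov P e s \<le> exp (e * (s - t0)) * (xm \<bullet> (P i *v xm))"
    unfolding weighted_lyapunov_def by simp
  moreover have "((\<lambda>u. exp (e * (u - t0)) * (x u \<bullet> (P i *v x u)))
      \<longlongrightarrow> exp (e * (s - t0)) * (xm \<bullet> (P i *v xm))) (at_left s)"
    by (intro tendsto_intros xm bounded_linear.tendsto[OF matrix_vector_mul_bounded_linear])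
  moreover have "\<forall>\<^sub>F u in at_left s.
      exp (e * (u - t0)) * (x u \<bullet> (P i *v x u)) = weighted_lyapunov P e u"
    using mode_left by eventually_elim (simp add: weighted_lyapunov_def right_mode_eq_mode)
  ultimately show ?thesis
    using Lim_transform_eventually by blast
qed

lemma exponential_decay:
  assumes bounds: "\<forall>i\<in>{1..N}. lyapunov_bounds (E i) (A i) (P i) e" and "e > 0"
    and jumps: "lyapunov_nonincreasing_at_switches P" and "t0 \<le> t"
  shows "norm (x t) \<le> 1 / e * exp (- (e / 2) * (t - t0)) * norm (x t0)"
proof -
  let ?V = "\<lambda>t. x t \<bullet> (P (right_mode t) *v x t)"
  have "weighted_lyapunov P e t \<le> weighted_lyapunov P e t0"
  proof (rule nonincreasing_across_jumps[OF finite_switches _ _ \<open>t0 \<le> t\<close>])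
    show "weighted_lyapunov P e u \<le> weighted_lyapunov P e a"
      if "t0 \<le> a" "a \<le> u" "switches \<inter> {a<..u} = {}" for a u
      using weighted_lyapunov_between_switches[OF bounds] that by (cases "a = u") auto
    show "\<exists>L. (weighted_lyapunov P e \<longlongrightarrow> L) (at_left s) \<and> weighted_lyapunov P e s \<le> L"
      if "s \<in> switches" "t0 < s" for s
      using weighted_lyapunov_at_switch[OF jumps that] .
  qed
  then have "exp (e * (t - t0)) * ?V t \<le> ?V t0"
    unfolding weighted_lyapunov_def by simp
  then have "exp (- e * (t - t0)) * (exp (e * (t - t0)) * ?V t) \<le> exp (- e * (t - t0)) * ?V t0"
    by (rule mult_left_mono) simp
  then have "?V t \<le> exp (- e * (t - t0)) * ?V t0"
    by (simp add: mult.assoc[symmetric] flip: exp_add)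
  moreover have "e * (norm (x t))\<^sup>2 \<le> ?V t" and "e * ?V t0 \<le> (norm (x t0))\<^sup>2"
    using bounds right_mode_in_range trajectory_in_right_mode_consistency_space \<open>t0 \<le> t\<close>
    unfolding lyapunov_bounds_def by blast+
  ultimately show ?thesis
    using le_of_squared_exp_decay[OF \<open>e > 0\<close> norm_ge_zero norm_ge_zero] by blast
qed

end

theorem theorem1:
  fixes N :: nat
    and E A P :: "nat \<Rightarrow> real^'n^'n"
    and Sys :: "(real \<times> (real \<Rightarrow> nat) \<times> (real \<Rightarrow> real^'n)) set"
  assumes nonsing: "\<forall>i \<in> {1..N}. invertible (A i)"
    and lyap: "\<forall>i \<in> {1..N}. lyapunov_matrix (E i) (A i) (P i)"
    and sols: "\<forall>(t0, \<sigma>, x) \<in> Sys. switched_solution N E A t0 \<sigma> x"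
    and jump: "\<forall>(t0, \<sigma>, x) \<in> Sys. \<forall>ts \<in> switch_times t0 \<sigma>. \<forall>i j xm xp.
                 t0 < ts \<and>
                 (\<forall>\<^sub>F t in at_left ts. \<sigma> t = i) \<and> (\<forall>\<^sub>F t in at_right ts. \<sigma> t = j) \<and>
                 (x \<longlongrightarrow> xm) (at_left ts) \<and> (x \<longlongrightarrow> xp) (at_right ts) \<longrightarrow>
                 xp \<bullet> (P j *v xp) \<le> xm \<bullet> (P i *v xm)"
  shows "GUES Sys"
proof -
  obtain e where "e > 0" and bounds: "\<forall>i\<in>{1..N}. lyapunov_bounds (E i) (A i) (P i) e"
    using uniform_lyapunov_bounds[OF finite_atLeastAtMost lyap] by blast
  have decay: "norm (x t) \<le> 1 / e * exp (- (e / 2) * (t - t0)) * norm (x t0)"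
    if "(t0, \<sigma>, x) \<in> Sys" and "t0 \<le> t" for t0 \<sigma> x t
  proof -
    interpret switched_trajectory N E A t0 \<sigma> x
      using sols nonsing that(1) by unfold_locales auto
    have "lyapunov_nonincreasing_at_switches P"
      using jump that(1) unfolding lyapunov_nonincreasing_at_switches_def by auto
    then show ?thesis
      using exponential_decay[OF bounds \<open>e > 0\<close>] \<open>t0 \<le> t\<close> by blast
  qed
  have "1 / e > 0" and "e / 2 > 0"
    using \<open>e > 0\<close> by auto
  then show ?thesis
    unfolding GUES_def using decay by blast
qed

end
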